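(* Let $E$ be a (Hausdorff, real) topological vector space. The following are equivalent: (i) $E$ contains the topological vector space $\mathbb{R}^{(\mathbb{N})}$ as a (topologically isomorphic) subspace; (ii) $E$ contains the topological group $\mathbb{Z}^{(\mathbb{N})}$ as a (topologically isomorphic) subgroup; (iii) $E$ has an infinite absolutely Cauchy summable subset. Moreover, if $E$ is complete, these three conditions are also equivalent to: (iv) $E$ contains the topological vector space $\mathbb{R}^{\mathbb{N}}$ as a (topologically isomorphic) subspace.
   Context: $\mathbb{R}^{\mathbb{N}}$ and $\mathbb{Z}^{\mathbb{N}}$ carry the Tychonoff product topology ($\mathbb{Z}$ discrete), and $\mathbb{R}^{(\mathbb{N})}$, $\mathbb{Z}^{(\mathbb{N})}$ denote the subsets of finitely supported sequences, with the subspace topology of the product. A subset $A$ of $E$ (viewed as an abelian topological group) is absolutely Cauchy summable if for every neighbourhood $U$ of $0$ there is a finite $F\subseteq A$ such that the additive subgroup generated by $A\setminus F$ is contained in $U$. *)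

theory Defs
  imports "HOL-Analysis.Analysis"
begin

text \<open>Finitely supported sequences (as subsets of the Tychonoff products
  nat => real and nat => int; the function types carry the
  product topology from HOL-Analysis Function_Topology, and int is discrete).\<close>

definition fin_supp :: "(nat \<Rightarrow> 'b::zero) set" where
  "fin_supp = {f. finite {n. f n \<noteq> 0}}"

definition int_span :: "'a::real_vector set \<Rightarrow> 'a set" where
  "int_span B = {(\<Sum>a\<in>F. of_int (k a) *\<^sub>R a) | F k. finite F \<and> F \<subseteq> B}"

definition abs_cauchy_summable :: "'a::{real_vector, topological_space} set \<Rightarrow> bool" where
  "abs_cauchy_summable A \<longleftrightarrow>
     (\<forall>U. open U \<and> 0 \<in> U \<longrightarrow> (\<exists>F. finite F \<and> F \<subseteq> A \<and> int_span (A - F) \<subseteq> U))"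

definition tvs_cauchy :: "'a::{real_vector, topological_space} filter \<Rightarrow> bool" where
  "tvs_cauchy F \<longleftrightarrow>
     (\<forall>U. open U \<and> 0 \<in> U \<longrightarrow> (\<exists>S. eventually (\<lambda>x. x \<in> S) F \<and> (\<forall>x\<in>S. \<forall>y\<in>S. x - y \<in> U)))"

definition tvs_complete :: "'a::{real_vector, topological_space} itself \<Rightarrow> bool" where
  "tvs_complete _ \<longleftrightarrow> (\<forall>F::'a filter. F \<noteq> bot \<and> tvs_cauchy F \<longrightarrow> (\<exists>x. F \<le> nhds x))"

end

theory Submission
  imports Defs
begin

text \<open>
  (i) implies (ii) by restricting to integer sequences, and (ii) implies (iii) by taking the
  images of the unit sequences, as every neighbourhood of 0 in the product topology contains
  all sequences vanishing on an initial segment.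

  Since real coefficients are limits of rescaled
  integer ones, an absolutely Cauchy summable set A has the real span of A - F inside any given
  neighbourhood of 0, for a suitable finite F. Hence A contains a sequence (a n) whose tail
  spans shrink to 0 and in which no term lies in the closed span of its successors. Then
  x \<mapsto> \<Sum> x n a n is a linear homeomorphism from the coefficient sequences for which the
  series converges onto its image: it is continuous because the tails vanish, and its inverse
  is continuous because each a n keeps a neighbourhood of 0 away from the closed span of the
  later terms. These coefficient sequences include the finitely supported ones, and all
  sequences when E is complete.
\<close>

lemma zero_nhd_half:
  fixes U :: "'a::topological_monoid_add set"
  assumes "open U" "0 \<in> U"
  obtains V where "open V" "0 \<in> V" "\<And>x y. x \<in> V \<Longrightarrow> y \<in> V \<Longrightarrow> x + y \<in> U"
proof -
  have "open ((\<lambda>p::'a \<times> 'a. fst p + snd p) -` U)"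
    using assms(1) by (intro open_vimage continuous_intros)
  moreover have "(0, 0) \<in> (\<lambda>p. fst p + snd p) -` U"
    using assms(2) by simp
  ultimately obtain A B where "open A" "open B" "(0, 0) \<in> A \<times> B" "A \<times> B \<subseteq> (\<lambda>p. fst p + snd p) -` U"
    by (rule open_prod_elim)
  then show ?thesis
    by (intro that[of "A \<inter> B"]) auto
qed

lemma tendsto_floor_mult_div:
  "((\<lambda>n. of_int \<lfloor>real (Suc n) * c\<rfloor> / real (Suc n)) \<longlongrightarrow> c) sequentially"
proof (rule tendsto_sandwich)
  have "c - 1 / m \<le> of_int \<lfloor>m * c\<rfloor> / m \<and> of_int \<lfloor>m * c\<rfloor> / m \<le> c"
    if "m > 0" for m :: real
  proof -
    have "m * c - 1 \<le> of_int \<lfloor>m * c\<rfloor>" "of_int \<lfloor>m * c\<rfloor> \<le> m * c"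
      using floor_correct[of "m * c"] by linarith+
    then have "(m * c - 1) / m \<le> of_int \<lfloor>m * c\<rfloor> / m" "of_int \<lfloor>m * c\<rfloor> / m \<le> c"
      using that by (auto intro: divide_right_mono simp: pos_divide_le_eq algebra_simps)
    with that show ?thesis
      by (simp add: diff_divide_distrib)
  qed
  then show "\<forall>\<^sub>F n in sequentially. c - 1 / real (Suc n) \<le> of_int \<lfloor>real (Suc n) * c\<rfloor> / real (Suc n)"
    and "\<forall>\<^sub>F n in sequentially. of_int \<lfloor>real (Suc n) * c\<rfloor> / real (Suc n) \<le> c"
    by simp_all
  show "((\<lambda>n. c - 1 / real (Suc n)) \<longlongrightarrow> c) sequentially"
    using tendsto_diff[OF tendsto_const LIMSEQ_inverse_real_of_nat] by (simp add: inverse_eq_divide)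
qed simp

lemma infinite_sequence_avoiding:
  assumes "infinite A" "\<And>b. b \<in> A \<Longrightarrow> finite (G b)"
  obtains a :: "nat \<Rightarrow> 'a" where "inj a" "range a \<subseteq> A" "\<forall>n. \<forall>m>n. a m \<notin> G (a n)"
proof -
  have "\<forall>B. \<exists>x. finite B \<longrightarrow> x \<in> A - B"
    using assms(1) by (metis Diff_infinite_finite ex_in_conv finite.emptyI)
  then obtain fresh where fresh: "\<And>B. finite B \<Longrightarrow> fresh B \<in> A - B"
    by metis
  define used where "used = rec_nat {} (\<lambda>_ B. B \<union> insert (fresh B) (G (fresh B)))"
  have used_Suc: "used (Suc n) = used n \<union> insert (fresh (used n)) (G (fresh (used n)))" for n
    by (simp add: used_def)
  define a where "a n = fresh (used n)" for n
  have "finite (used n) \<and> a n \<in> A - used n" for n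
  proof (induction n)
    case 0
    then show ?case using fresh[of "{}"] by (simp add: used_def a_def)
  next
    case (Suc n)
    then have "finite (used (Suc n))"
      using assms(2) by (simp add: used_Suc a_def)
    then show ?case using fresh by (simp add: a_def)
  qed
  then have a: "a n \<in> A" "a n \<notin> used n" for n
    by auto
  have "mono used"
    unfolding mono_iff_le_Suc by (auto simp: used_Suc)
  have "insert (a n) (G (a n)) \<subseteq> used m" if "n < m" for n m
  proof -
    have "insert (a n) (G (a n)) \<subseteq> used (Suc n)"
      by (auto simp: used_Suc a_def)
    also have "\<dots> \<subseteq> used m"
      using \<open>mono used\<close> that by (simp add: monoD Suc_le_eq)
    finally show ?thesis .
  qed
  then have later: "a m \<noteq> a n \<and> a m \<notin> G (a n)" if "n < m" for n m
    using a(2)[of m] that by blast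
  show ?thesis
  proof
    show "inj a"
      by (rule injI, metis later linorder_neqE_nat)
    show "range a \<subseteq> A"
      using a(1) by blast
    show "\<forall>n. \<forall>m>n. a m \<notin> G (a n)"
      using later by blast
  qed
qed

lemma open_coordinate_box: "open {x::nat \<Rightarrow> real. \<forall>j<N. \<bar>x j - y j\<bar> < d}"
proof -
  have "{x::nat \<Rightarrow> real. \<forall>j<N. \<bar>x j - y j\<bar> < d} = (\<Inter>j<N. (\<lambda>x. x j) -` ball (y j) d)"
    by (auto simp: dist_real_def abs_minus_commute)
  also have "open \<dots>"
    by (intro open_INT finite_lessThan ballI open_vimage open_ball continuous_on_product_coordinates)
  finally show ?thesis .
qed

lemma open_fun_initial_segment:
  fixes W :: "(nat \<Rightarrow> 'c::topological_space) set"
  assumes "open W" "y \<in> W"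
  obtains N where "\<forall>x. (\<forall>n<N. x n = y n) \<longrightarrow> x \<in> W"
proof -
  have "openin (product_topology (\<lambda>i. euclidean) UNIV) W"
    using assms(1) unfolding open_fun_def .
  from product_topology_open_contains_basis[OF this assms(2)]
  obtain X where X: "y \<in> (\<Pi>\<^sub>E i\<in>UNIV. X i)" "finite {i. X i \<noteq> UNIV}" "(\<Pi>\<^sub>E i\<in>UNIV. X i) \<subseteq> W"
    by auto
  obtain N where N: "\<forall>i\<in>{i. X i \<noteq> UNIV}. i < N"
    using X(2) finite_nat_set_iff_bounded by blast
  show ?thesis
  proof (rule that, intro allI impI)
    fix x :: "nat \<Rightarrow> 'c" assume x: "\<forall>n<N. x n = y n"
    have "x i \<in> X i" for i
    proof (cases "i < N")
      case True
      then show ?thesis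
        using x X(1) by (auto simp: PiE_UNIV_domain)
    next
      case False
      then have "X i = UNIV"
        using N by blast
      then show ?thesis
        by simp
    qed
    then show "x \<in> W"
      using X(3) by (auto simp: PiE_UNIV_domain)
  qed
qed

lemma continuous_on_floor_Ints:
  fixes h :: "'c::topological_space \<Rightarrow> real"
  assumes "continuous_on S h" "\<And>y. y \<in> S \<Longrightarrow> h y \<in> \<int>"
  shows "continuous_on S (\<lambda>y. \<lfloor>h y\<rfloor>)"
  unfolding continuous_on_def
proof
  fix y0 assume "y0 \<in> S"
  then have "eventually (\<lambda>y. dist (h y) (h y0) < 1) (at y0 within S)"
    using assms(1) unfolding continuous_on_def tendsto_iff by simp
  moreover have "eventually (\<lambda>y. y \<in> S) (at y0 within S)"
    by (simp add: eventually_at_filter)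
  ultimately have "eventually (\<lambda>y. \<lfloor>h y\<rfloor> = \<lfloor>h y0\<rfloor>) (at y0 within S)"
  proof eventually_elim
    case (elim y)
    then have "h y - h y0 \<in> \<int>" "\<bar>h y - h y0\<bar> < 1"
      using assms(2) \<open>y0 \<in> S\<close> by (auto simp: dist_real_def)
    then have "h y = h y0"
      using Ints_nonzero_abs_ge1 by fastforce
    then show ?case by simp
  qed
  then show "((\<lambda>y. \<lfloor>h y\<rfloor>) \<longlongrightarrow> \<lfloor>h y0\<rfloor>) (at y0 within S)"
    by (simp add: tendsto_discrete)
qed

lemma fin_supp_add: "x \<in> fin_supp \<Longrightarrow> y \<in> fin_supp \<Longrightarrow> (\<lambda>n. x n + y n :: 'b::monoid_add) \<in> fin_supp"
  unfolding fin_supp_def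
  by (rule CollectI, rule finite_subset[of _ "{n. x n \<noteq> 0} \<union> {n. y n \<noteq> 0}"]) auto

lemma fin_supp_mult: "x \<in> fin_supp \<Longrightarrow> (\<lambda>n. c * x n :: 'b::mult_zero) \<in> fin_supp"
  unfolding fin_supp_def
  by (rule CollectI, rule finite_subset[of _ "{n. x n \<noteq> 0}"]) auto

lemma int_span_subset:
  assumes "0 \<in> G" "\<And>x y. x \<in> G \<Longrightarrow> y \<in> G \<Longrightarrow> x + y \<in> G"
    and "\<And>k b. b \<in> B \<Longrightarrow> of_int k *\<^sub>R b \<in> G"
  shows "int_span (B::'a::real_vector set) \<subseteq> G"
proof
  fix v assume "v \<in> int_span B"
  then obtain F k where F: "finite F" "F \<subseteq> B" and v: "v = (\<Sum>b\<in>F. of_int (k b) *\<^sub>R b)"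
    unfolding int_span_def by blast
  have "(\<Sum>b\<in>F. of_int (k b) *\<^sub>R b) \<in> G"
    using F by (induction F rule: finite_induct) (auto intro: assms)
  then show "v \<in> G"
    by (simp add: v)
qed

section \<open>Topological vector spaces\<close>

locale topological_vector_space =
  fixes E :: "'a::{real_vector, topological_monoid_add, t2_space} itself"
  assumes continuous_on_scaleR_pair: "continuous_on UNIV (\<lambda>p::real \<times> 'a. fst p *\<^sub>R snd p)"
begin

lemma tendsto_scaleR_tvs:
  fixes g :: "'b \<Rightarrow> 'a"
  assumes "(f \<longlongrightarrow> c) F" "(g \<longlongrightarrow> v) F"
  shows "((\<lambda>x. f x *\<^sub>R g x) \<longlongrightarrow> c *\<^sub>R v) F"
  using continuous_on_tendsto_compose[OF continuous_on_scaleR_pair tendsto_Pair[OF assms]]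
  by (simp add: o_def)

lemma tendsto_diff_tvs:
  fixes f g :: "'b \<Rightarrow> 'a"
  assumes "(f \<longlongrightarrow> v) F" "(g \<longlongrightarrow> w) F"
  shows "((\<lambda>x. f x - g x) \<longlongrightarrow> v - w) F"
  using tendsto_add[OF assms(1) tendsto_scaleR_tvs[OF tendsto_const[of "-1"] assms(2)]] by simp

lemma tendsto_sum_tvs:
  fixes f :: "'i \<Rightarrow> 'b \<Rightarrow> 'a"
  assumes "finite I" "\<And>i. i \<in> I \<Longrightarrow> (f i \<longlongrightarrow> v i) F"
  shows "((\<lambda>x. \<Sum>i\<in>I. f i x) \<longlongrightarrow> (\<Sum>i\<in>I. v i)) F"
  using assms by (induction I rule: finite_induct) (auto intro!: tendsto_add)

lemma continuous_on_affine_tvs: "continuous_on S (\<lambda>z::'a. c *\<^sub>R z + v)"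
  by (auto simp: continuous_on_def intro!: tendsto_add tendsto_scaleR_tvs tendsto_ident_at tendsto_const)

lemma open_affine_vimage: "open (U::'a set) \<Longrightarrow> open {z. c *\<^sub>R z + v \<in> U}"
  using open_vimage[OF _ continuous_on_affine_tvs] by (simp add: vimage_def)

lemma zero_nhd_balanced:
  assumes "open (U::'a set)" "0 \<in> U"
  obtains V where "open V" "0 \<in> V" "\<And>t v. \<bar>t\<bar> \<le> 1 \<Longrightarrow> v \<in> V \<Longrightarrow> t *\<^sub>R v \<in> U"
proof -
  have "open ((\<lambda>p::real \<times> 'a. fst p *\<^sub>R snd p) -` U)"
    using open_vimage[OF assms(1) continuous_on_scaleR_pair] .
  moreover have "(0, 0) \<in> (\<lambda>p::real \<times> 'a. fst p *\<^sub>R snd p) -` U"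
    using assms(2) by simp
  ultimately obtain A B where AB: "open A" "open B" "(0, 0) \<in> A \<times> B"
      "A \<times> B \<subseteq> (\<lambda>p::real \<times> 'a. fst p *\<^sub>R snd p) -` U"
    by (rule open_prod_elim)
  then obtain d where d: "d > 0" "ball 0 d \<subseteq> A"
    by (meson SigmaD1 openE)
  show ?thesis
  proof
    show "open {v. (2 / d) *\<^sub>R v + 0 \<in> B}"
      using open_affine_vimage[OF \<open>open B\<close>] .
    show "0 \<in> {v. (2 / d) *\<^sub>R v + 0 \<in> B}"
      using AB(3) by simp
    fix t :: real and v assume "\<bar>t\<bar> \<le> 1" "v \<in> {v. (2 / d) *\<^sub>R v + 0 \<in> B}"
    moreover from \<open>\<bar>t\<bar> \<le> 1\<close> have "t * d / 2 \<in> A"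
      using d by (auto simp: dist_real_def abs_mult)
    ultimately have "(t * d / 2) *\<^sub>R ((2 / d) *\<^sub>R v) \<in> U"
      using AB(4) by auto
    then show "t *\<^sub>R v \<in> U"
      using d by simp
  qed
qed

lemma sums_add_tvs:
  fixes f g :: "nat \<Rightarrow> 'a"
  shows "f sums v \<Longrightarrow> g sums w \<Longrightarrow> (\<lambda>n. f n + g n) sums (v + w)"
  unfolding sums_def sum.distrib by (rule tendsto_add)

lemma sums_scaleR_tvs:
  fixes f :: "nat \<Rightarrow> 'a"
  shows "f sums v \<Longrightarrow> (\<lambda>n. c *\<^sub>R f n) sums (c *\<^sub>R v)"
  unfolding sums_def scaleR_sum_right[symmetric] by (rule tendsto_scaleR_tvs[OF tendsto_const])

text \<open>The closure of S lies in S + W for every neighbourhood W of 0.\<close>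

lemma closure_subset_zero_nhd:
  assumes "open (W::'a set)" "0 \<in> W" "S \<subseteq> W" "\<And>x y. x \<in> W \<Longrightarrow> y \<in> W \<Longrightarrow> x + y \<in> V"
  shows "closure S \<subseteq> V"
proof
  fix l assume "l \<in> closure S"
  moreover have "open {z. (-1) *\<^sub>R z + l \<in> W}"
    using open_affine_vimage[OF \<open>open W\<close>] .
  moreover have "l \<in> {z. (-1) *\<^sub>R z + l \<in> W}"
    using \<open>0 \<in> W\<close> by simp
  ultimately obtain s where "s \<in> S" "(-1) *\<^sub>R s + l \<in> W"
    unfolding closure_iff_nhds_not_empty by blast
  then have "l - s \<in> W"
    by simp
  then show "l \<in> V"
    using assms(3) assms(4)[of s "l - s"] \<open>s \<in> S\<close> by auto
qed

lemma scaleR_mem_closure_span: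
  assumes "l \<in> closure (span X)"
  shows "c *\<^sub>R l \<in> closure (span (X::'a set))"
proof -
  have "(\<lambda>z. c *\<^sub>R z + 0) ` closure (span X) \<subseteq> closure (span X)"
    by (rule image_closure_subset[OF continuous_on_affine_tvs])
      (auto intro: closure_subset[THEN subsetD] span_scale)
  then show ?thesis
    using assms by auto
qed

lemma sum_small_coeffs_mem:
  fixes v :: "'i \<Rightarrow> 'a"
  assumes "finite J" "open Z" "0 \<in> Z"
  shows "\<exists>d>0. \<forall>c. (\<forall>j\<in>J. \<bar>c j\<bar> < d) \<longrightarrow> (\<Sum>j\<in>J. c j *\<^sub>R v j) \<in> Z"
  using assms
proof (induction J arbitrary: Z rule: finite_induct)
  case empty
  then show ?case by (intro exI[of _ 1]) auto
next
  case (insert i J)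
  obtain Z1 where Z1: "open Z1" "0 \<in> Z1" "\<And>x y. x \<in> Z1 \<Longrightarrow> y \<in> Z1 \<Longrightarrow> x + y \<in> Z"
    using zero_nhd_half[OF insert.prems] by blast
  obtain d1 where d1: "d1 > 0" "\<forall>c. (\<forall>j\<in>J. \<bar>c j\<bar> < d1) \<longrightarrow> (\<Sum>j\<in>J. c j *\<^sub>R v j) \<in> Z1"
    using insert.IH[OF Z1(1,2)] by blast
  have "continuous_on UNIV (\<lambda>t. t *\<^sub>R v i)"
    by (auto simp: continuous_on_def intro!: tendsto_scaleR_tvs tendsto_ident_at tendsto_const)
  then have "open {t. t *\<^sub>R v i \<in> Z1}"
    using open_vimage[OF Z1(1)] by (simp add: vimage_def)
  then obtain d2 where d2: "d2 > 0" "ball 0 d2 \<subseteq> {t. t *\<^sub>R v i \<in> Z1}"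
    using Z1(2) by (auto elim!: openE)
  show ?case
  proof (intro exI[of _ "min d1 d2"] conjI allI impI)
    fix c assume c: "\<forall>j\<in>insert i J. \<bar>c j\<bar> < min d1 d2"
    then have "c i *\<^sub>R v i \<in> Z1"
      using d2(2) by (auto simp: dist_real_def)
    moreover have "(\<Sum>j\<in>J. c j *\<^sub>R v j) \<in> Z1"
      using c d1(2) by auto
    ultimately show "(\<Sum>j\<in>insert i J. c j *\<^sub>R v j) \<in> Z"
      using Z1(3) insert.hyps by simp
  qed (use d1 d2 in simp)
qed

lemma not_in_closure_span_coeff_bound:
  assumes "v \<notin> closure (span (X::'a set))"
  obtains W where "open W" "0 \<in> W"
    "\<And>t l. l \<in> closure (span X) \<Longrightarrow> t *\<^sub>R v + l \<in> W \<Longrightarrow> \<bar>t\<bar> < 1"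
proof -
  define Away where "Away = {w. (-1) *\<^sub>R w + v \<in> - closure (span X)}"
  have "open Away"
    unfolding Away_def by (rule open_affine_vimage[OF open_Compl[OF closed_closure]])
  moreover have "0 \<in> Away"
    unfolding Away_def using assms by simp
  ultimately obtain W where W: "open W" "0 \<in> W" "\<And>t w. \<bar>t\<bar> \<le> 1 \<Longrightarrow> w \<in> W \<Longrightarrow> t *\<^sub>R w \<in> Away"
    using zero_nhd_balanced by blast
  show ?thesis
  proof (rule that[OF W(1,2)], rule ccontr)
    fix t l assume l: "l \<in> closure (span X)" and "t *\<^sub>R v + l \<in> W" and "\<not> \<bar>t\<bar> < 1"
    then have "(1 / t) *\<^sub>R (t *\<^sub>R v + l) \<in> Away"
      using W(3) by (simp add: abs_divide)
    moreover have "(1 / t) *\<^sub>R (t *\<^sub>R v + l) = v + (1 / t) *\<^sub>R l"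
      using \<open>\<not> \<bar>t\<bar> < 1\<close> by (auto simp: scaleR_add_right)
    ultimately show False
      using scaleR_mem_closure_span[OF l, of "-1 / t"] by (simp add: Away_def)
  qed
qed

section \<open>Absolutely Cauchy summable sets\<close>

text \<open>Every real combination \<Sum> c(b) b is the limit of the rescaled integer
  combinations (1/n) \<Sum> \<lfloor>n c(b)\<rfloor> b, which a balanced neighbourhood of 0 absorbs.\<close>

lemma span_subset_if_int_span_subset:
  assumes "open (U::'a set)" "0 \<in> U"
  obtains V where "open V" "0 \<in> V" "\<And>B. int_span B \<subseteq> V \<Longrightarrow> span B \<subseteq> U"
proof -
  obtain U1 where U1: "open U1" "0 \<in> U1" "\<And>x y. x \<in> U1 \<Longrightarrow> y \<in> U1 \<Longrightarrow> x + y \<in> U"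
    using zero_nhd_half[OF assms] by blast
  obtain V where V: "open V" "0 \<in> V" "\<And>t v. \<bar>t\<bar> \<le> 1 \<Longrightarrow> v \<in> V \<Longrightarrow> t *\<^sub>R v \<in> U1"
    using zero_nhd_balanced[OF U1(1,2)] by blast
  show ?thesis
  proof (rule that[OF V(1,2)], rule subsetI)
    fix B y assume B: "int_span B \<subseteq> V" and "y \<in> span B"
    then obtain S c where S: "finite S" "S \<subseteq> B" and y: "y = (\<Sum>b\<in>S. c b *\<^sub>R b)"
      by (auto simp: span_explicit)
    define approx where
      "approx n = (\<Sum>b\<in>S. (of_int \<lfloor>real (Suc n) * c b\<rfloor> / real (Suc n)) *\<^sub>R b)" for n
    have "(approx \<longlongrightarrow> y) sequentially"
      unfolding approx_def y
      by (intro tendsto_sum_tvs[OF S(1)] tendsto_scaleR_tvs tendsto_floor_mult_div tendsto_const)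
    from tendsto_diff_tvs[OF tendsto_const[of y] this]
    have "((\<lambda>n. y - approx n) \<longlongrightarrow> 0) sequentially"
      by simp
    then obtain n where n: "y - approx n \<in> U1"
      using U1(1,2) by (auto simp: tendsto_def eventually_sequentially)
    have "(\<Sum>b\<in>S. of_int \<lfloor>real (Suc n) * c b\<rfloor> *\<^sub>R b) \<in> int_span B"
      unfolding int_span_def using S
      by (auto intro!: exI[of _ S] exI[of _ "\<lambda>b. \<lfloor>real (Suc n) * c b\<rfloor>"])
    then have "(1 / real (Suc n)) *\<^sub>R (\<Sum>b\<in>S. of_int \<lfloor>real (Suc n) * c b\<rfloor> *\<^sub>R b) \<in> U1"
      using B V(3) by auto
    moreover have "(1 / real (Suc n)) *\<^sub>R (\<Sum>b\<in>S. of_int \<lfloor>real (Suc n) * c b\<rfloor> *\<^sub>R b) = approx n"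
      by (simp add: approx_def scaleR_sum_right)
    ultimately show "y \<in> U"
      using U1(3)[of "approx n" "y - approx n"] n by simp
  qed
qed

lemma abs_cauchy_summable_span_cofinite:
  assumes "abs_cauchy_summable A" "open (U::'a set)" "0 \<in> U"
  obtains F where "finite F" "F \<subseteq> A" "span (A - F) \<subseteq> U"
proof -
  obtain V where V: "open V" "0 \<in> V" "\<And>B. int_span B \<subseteq> V \<Longrightarrow> span B \<subseteq> U"
    using span_subset_if_int_span_subset[OF assms(2,3)] by blast
  obtain F where F: "finite F" "F \<subseteq> A" "int_span (A - F) \<subseteq> V"
    using assms(1) V(1,2) unfolding abs_cauchy_summable_def by blast
  show ?thesis
    using F(1,2) V(3)[OF F(3)] by (rule that)
qed

lemma abs_cauchy_summable_not_in_closure_span: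
  assumes "abs_cauchy_summable (A::'a set)" "b \<noteq> 0"
  obtains F where "finite F" "b \<notin> closure (span (A - F))"
proof -
  obtain Ob where Ob: "open Ob" "0 \<in> Ob" "b \<notin> Ob"
    using t1_space[OF \<open>b \<noteq> 0\<close>[symmetric]] by blast
  obtain V where V: "open V" "0 \<in> V" "\<And>x y. x \<in> V \<Longrightarrow> y \<in> V \<Longrightarrow> x + y \<in> Ob"
    using zero_nhd_half[OF Ob(1,2)] by blast
  obtain F where F: "finite F" "F \<subseteq> A" "span (A - F) \<subseteq> V"
    by (rule abs_cauchy_summable_span_cofinite[OF assms(1) V(1,2)])
  have "closure (span (A - F)) \<subseteq> Ob"
    by (rule closure_subset_zero_nhd[OF V(1,2) F(3) V(3)])
  with F(1) Ob(3) show ?thesis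
    by (intro that) auto
qed

lemma abs_cauchy_summable_tail_spans_vanish:
  fixes a :: "nat \<Rightarrow> 'a"
  assumes "abs_cauchy_summable A" "inj a" "range a \<subseteq> A" "open U" "0 \<in> U"
  obtains N where "span (a ` {N..}) \<subseteq> U"
proof -
  obtain F where F: "finite F" "F \<subseteq> A" "span (A - F) \<subseteq> U"
    by (rule abs_cauchy_summable_span_cofinite[OF assms(1,4,5)])
  obtain N where N: "\<forall>m\<in>a -` F. m < N"
    using finite_vimageI[OF F(1) assms(2)] finite_nat_set_iff_bounded by blast
  have "a ` {N..} \<subseteq> A - F"
  proof
    fix y assume "y \<in> a ` {N..}"
    then obtain m where "N \<le> m" "y = a m"
      by auto
    moreover have "a m \<in> A"
      using assms(3) by auto
    moreover have "a m \<notin> F"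
      using N \<open>N \<le> m\<close> by (meson not_le vimageI)
    ultimately show "y \<in> A - F"
      by simp
  qed
  then have "span (a ` {N..}) \<subseteq> U"
    using F(3) by (meson span_mono order_trans)
  then show ?thesis
    by (rule that)
qed

end

text \<open>Sequences along which x \<mapsto> \<Sum> x n a n is a topological embedding.\<close>

locale basic_sequence = topological_vector_space E
    for E :: "'a::{real_vector, topological_monoid_add, t2_space} itself" +
  fixes a :: "nat \<Rightarrow> 'a"
  assumes tail_spans_vanish: "\<And>U. open U \<Longrightarrow> 0 \<in> U \<Longrightarrow> \<exists>N. span (a ` {N..}) \<subseteq> U"
    and not_in_closure_tail_span: "\<And>n. a n \<notin> closure (span (a ` {Suc n..}))"

lemma (in topological_vector_space) abs_cauchy_summable_basic_sequence:
  assumes "infinite (A::'a set)" "abs_cauchy_summable A"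
  obtains a :: "nat \<Rightarrow> 'a" where "basic_sequence a"
proof -
  have "\<exists>G. finite G \<and> b \<notin> closure (span (A - G))" if "b \<in> A - {0}" for b
    using abs_cauchy_summable_not_in_closure_span[OF assms(2), of b] that by blast
  then obtain G where G: "\<And>b. b \<in> A - {0} \<Longrightarrow> finite (G b) \<and> b \<notin> closure (span (A - G b))"
    by metis
  have fin: "finite (G b)" if "b \<in> A - {0}" for b
    using G[OF that] ..
  have "infinite (A - {0})"
    using assms(1) by simp
  obtain a :: "nat \<Rightarrow> 'a" where a: "inj a" "range a \<subseteq> A - {0}" "\<forall>n. \<forall>m>n. a m \<notin> G (a n)"
    by (rule infinite_sequence_avoiding[OF \<open>infinite (A - {0})\<close> fin])
  have "basic_sequence a"
  proof
    fix U :: "'a set" assume "open U" "0 \<in> U"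
    moreover have "range a \<subseteq> A"
      using a(2) by blast
    ultimately obtain N where "span (a ` {N..}) \<subseteq> U"
      using abs_cauchy_summable_tail_spans_vanish[OF assms(2) a(1)] by blast
    then show "\<exists>N. span (a ` {N..}) \<subseteq> U" ..
  next
    fix n
    have "a ` {Suc n..} \<subseteq> A - G (a n)"
      using a(2,3) by (auto simp: Suc_le_eq)
    then have "closure (span (a ` {Suc n..})) \<subseteq> closure (span (A - G (a n)))"
      by (intro closure_mono span_mono)
    moreover have "a n \<notin> closure (span (A - G (a n)))"
      using G a(2) by blast
    ultimately show "a n \<notin> closure (span (a ` {Suc n..}))"
      by blast
  qed
  then show ?thesis
    by (rule that)
qed

section \<open>The synthesis map of a basic sequence\<close>

context basic_sequence
begin

definition summable_coeffs :: "(nat \<Rightarrow> real) set" where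
  "summable_coeffs = {x. summable (\<lambda>n. x n *\<^sub>R a n)}"

definition synth :: "(nat \<Rightarrow> real) \<Rightarrow> 'a" where
  "synth x = (\<Sum>n. x n *\<^sub>R a n)"

lemma synth_sums: "x \<in> summable_coeffs \<Longrightarrow> (\<lambda>n. x n *\<^sub>R a n) sums synth x"
  unfolding summable_coeffs_def synth_def by (simp add: summable_sums)

lemma sums_imp_synth: "(\<lambda>n. x n *\<^sub>R a n) sums v \<Longrightarrow> x \<in> summable_coeffs \<and> synth x = v"
  unfolding summable_coeffs_def synth_def by (simp add: sums_iff)

lemma synth_add:
  assumes "x \<in> summable_coeffs" "y \<in> summable_coeffs"
  shows "(\<lambda>n. x n + y n) \<in> summable_coeffs \<and> synth (\<lambda>n. x n + y n) = synth x + synth y"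
  using sums_add_tvs[OF synth_sums[OF assms(1)] synth_sums[OF assms(2)]]
  by (intro sums_imp_synth) (simp add: scaleR_add_left)

lemma synth_scaleR:
  assumes "x \<in> summable_coeffs"
  shows "(\<lambda>n. c * x n) \<in> summable_coeffs \<and> synth (\<lambda>n. c * x n) = c *\<^sub>R synth x"
  using sums_scaleR_tvs[OF synth_sums[OF assms], of c] by (intro sums_imp_synth) simp

lemma synth_diff:
  assumes "x \<in> summable_coeffs" "y \<in> summable_coeffs"
  shows "(\<lambda>n. x n - y n) \<in> summable_coeffs \<and> synth (\<lambda>n. x n - y n) = synth x - synth y"
  using synth_add[OF assms(1) synth_scaleR[OF assms(2), of "-1", THEN conjunct1]]
    synth_scaleR[OF assms(2), of "-1"]
  by simp

lemma partial_sums_diff_mem_tail_span: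
  assumes "N \<le> M"
  shows "(\<Sum>n<M. x n *\<^sub>R a n) - (\<Sum>n<N. x n *\<^sub>R a n) \<in> span (a ` {N..})"
proof -
  have "(\<Sum>n<M. x n *\<^sub>R a n) - (\<Sum>n<N. x n *\<^sub>R a n) = (\<Sum>n\<in>{N..<M}. x n *\<^sub>R a n)"
    using assms by (simp add: lessThan_atLeast0 sum_diff_nat_ivl)
  also have "\<dots> \<in> span (a ` {N..})"
    by (intro span_sum span_scale span_base) auto
  finally show ?thesis .
qed

lemma synth_minus_partial_sum_mem:
  assumes "x \<in> summable_coeffs"
  shows "synth x - (\<Sum>n<N. x n *\<^sub>R a n) \<in> closure (span (a ` {N..}))"
proof (rule Lim_in_closed_set)
  show "((\<lambda>M. (\<Sum>n<M. x n *\<^sub>R a n) - (\<Sum>n<N. x n *\<^sub>R a n))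
      \<longlongrightarrow> synth x - (\<Sum>n<N. x n *\<^sub>R a n)) sequentially"
    using synth_sums[OF assms] unfolding sums_def by (intro tendsto_diff_tvs tendsto_const)
  show "\<forall>\<^sub>F M in sequentially.
      (\<Sum>n<M. x n *\<^sub>R a n) - (\<Sum>n<N. x n *\<^sub>R a n) \<in> closure (span (a ` {N..}))"
    unfolding eventually_sequentially
    using partial_sums_diff_mem_tail_span closure_subset by blast
qed auto

lemma closure_tail_span_vanish:
  assumes "open U" "0 \<in> U"
  obtains N where "closure (span (a ` {N..})) \<subseteq> U"
proof -
  obtain W where W: "open W" "0 \<in> W" "\<And>x y. x \<in> W \<Longrightarrow> y \<in> W \<Longrightarrow> x + y \<in> U"
    using zero_nhd_half[OF assms] by blast
  obtain N where "span (a ` {N..}) \<subseteq> W"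
    using tail_spans_vanish[OF W(1,2)] by blast
  then show ?thesis
    by (intro that closure_subset_zero_nhd[OF W(1,2) _ W(3)])
qed

lemma continuous_on_synth: "continuous_on summable_coeffs synth"
  unfolding continuous_on_def
proof (intro ballI)
  fix x0 assume x0: "x0 \<in> summable_coeffs"
  show "(synth \<longlongrightarrow> synth x0) (at x0 within summable_coeffs)"
    unfolding tendsto_def
  proof (intro allI impI)
    fix V assume V: "open V" "synth x0 \<in> V"
    define U where "U = {z. 1 *\<^sub>R z + synth x0 \<in> V}"
    have "open U"
      unfolding U_def by (rule open_affine_vimage[OF V(1)])
    moreover have "0 \<in> U"
      using V(2) by (simp add: U_def)
    ultimately obtain U1 where U1: "open U1" "0 \<in> U1" "\<And>x y. x \<in> U1 \<Longrightarrow> y \<in> U1 \<Longrightarrow> x + y \<in> U"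
      using zero_nhd_half by blast
    obtain N where N: "closure (span (a ` {N..})) \<subseteq> U1"
      using closure_tail_span_vanish[OF U1(1,2)] by blast
    obtain d where d: "d > 0" "\<forall>c. (\<forall>j\<in>{..<N}. \<bar>c j\<bar> < d) \<longrightarrow> (\<Sum>j\<in>{..<N}. c j *\<^sub>R a j) \<in> U1"
      using sum_small_coeffs_mem[OF finite_lessThan U1(1,2)] by blast
    have "synth x \<in> V" if x: "x \<in> summable_coeffs" "\<forall>j<N. \<bar>x j - x0 j\<bar> < d" for x
    proof -
      define y where "y = (\<lambda>n. x n - x0 n)"
      have y: "y \<in> summable_coeffs" "synth y = synth x - synth x0"
        unfolding y_def using synth_diff[OF x(1) x0] by simp_all
      have "(\<Sum>j<N. y j *\<^sub>R a j) \<in> U1"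
        using d(2) x(2) by (simp add: y_def)
      moreover have "synth y - (\<Sum>j<N. y j *\<^sub>R a j) \<in> U1"
        using synth_minus_partial_sum_mem[OF y(1)] N by blast
      ultimately have "(\<Sum>j<N. y j *\<^sub>R a j) + (synth y - (\<Sum>j<N. y j *\<^sub>R a j)) \<in> U"
        by (rule U1(3))
      then have "synth y \<in> U"
        by simp
      then show ?thesis
        using y(2) by (simp add: U_def)
    qed
    then show "\<forall>\<^sub>F x in at x0 within summable_coeffs. synth x \<in> V"
      unfolding eventually_at_topological
      using open_coordinate_box[of N x0 d] d(1)
      by (intro exI[of _ "{x. \<forall>j<N. \<bar>x j - x0 j\<bar> < d}"]) auto
  qed
qed

text \<open>Once the earlier coefficients are small, the i-th one is controlled by a neighbourhood
  of 0 that a i keeps away from the closed span of the later terms.\<close>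

lemma coeff_small_if_synth_and_head_small:
  assumes "e > 0"
  shows "\<exists>Z d. open Z \<and> 0 \<in> Z \<and> d > 0 \<and>
    (\<forall>x\<in>summable_coeffs. synth x \<in> Z \<longrightarrow> (\<forall>j<i. \<bar>x j\<bar> < d) \<longrightarrow> \<bar>x i\<bar> < e)"
proof -
  obtain W where W: "open W" "0 \<in> W"
    "\<And>t l. l \<in> closure (span (a ` {Suc i..})) \<Longrightarrow> t *\<^sub>R a i + l \<in> W \<Longrightarrow> \<bar>t\<bar> < 1"
    using not_in_closure_span_coeff_bound[OF not_in_closure_tail_span] by blast
  define We where "We = {z. (1 / e) *\<^sub>R z + 0 \<in> W}"
  have "open We"
    unfolding We_def by (rule open_affine_vimage[OF W(1)])
  moreover have "0 \<in> We"
    using W(2) by (simp add: We_def)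
  ultimately obtain Z where Z: "open Z" "0 \<in> Z" "\<And>x y. x \<in> Z \<Longrightarrow> y \<in> Z \<Longrightarrow> x + y \<in> We"
    using zero_nhd_half by blast
  define Z' where "Z' = {z. (-1) *\<^sub>R z + 0 \<in> Z}"
  have "open Z'"
    unfolding Z'_def by (rule open_affine_vimage[OF Z(1)])
  moreover have "0 \<in> Z'"
    using Z(2) by (simp add: Z'_def)
  ultimately obtain d where d: "d > 0" "\<forall>c. (\<forall>j\<in>{..<i}. \<bar>c j\<bar> < d) \<longrightarrow> (\<Sum>j\<in>{..<i}. c j *\<^sub>R a j) \<in> Z'"
    using sum_small_coeffs_mem[OF finite_lessThan] by blast
  have "\<bar>x i\<bar> < e" if x: "x \<in> summable_coeffs" "synth x \<in> Z" "\<forall>j<i. \<bar>x j\<bar> < d" for x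
  proof -
    have "- (\<Sum>j<i. x j *\<^sub>R a j) \<in> Z"
      using d(2) x(3) by (simp add: Z'_def)
    with x(2) have "synth x + - (\<Sum>j<i. x j *\<^sub>R a j) \<in> We"
      by (intro Z(3)) auto
    moreover define l where "l = synth x - (\<Sum>j<Suc i. x j *\<^sub>R a j)"
    then have "synth x + - (\<Sum>j<i. x j *\<^sub>R a j) = x i *\<^sub>R a i + l"
      by (simp add: algebra_simps)
    ultimately have "x i *\<^sub>R a i + l \<in> We"
      by simp
    then have "(x i / e) *\<^sub>R a i + (1 / e) *\<^sub>R l \<in> W"
      by (simp add: We_def scaleR_add_right)
    moreover have "l \<in> closure (span (a ` {Suc i..}))"
      unfolding l_def by (rule synth_minus_partial_sum_mem[OF x(1)])
    ultimately have "\<bar>x i / e\<bar> < 1"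
      by (intro W(3)[OF scaleR_mem_closure_span])
    then show ?thesis
      using assms by (simp add: abs_divide)
  qed
  then show ?thesis
    using Z(1,2) d(1) by (intro exI[of _ Z] exI[of _ d]) auto
qed

lemma synth_small_imp_coeffs_small:
  assumes "e > 0"
  shows "\<exists>U. open U \<and> 0 \<in> U \<and> (\<forall>x\<in>summable_coeffs. synth x \<in> U \<longrightarrow> (\<forall>j<i. \<bar>x j\<bar> < e))"
  using assms
proof (induction i arbitrary: e)
  case 0
  then show ?case
    by (intro exI[of _ UNIV]) auto
next
  case (Suc i)
  obtain Z d where Z: "open Z" "0 \<in> Z" "d > 0"
    and small_i: "\<forall>x\<in>summable_coeffs. synth x \<in> Z \<longrightarrow> (\<forall>j<i. \<bar>x j\<bar> < d) \<longrightarrow> \<bar>x i\<bar> < e"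
    using coeff_small_if_synth_and_head_small[OF Suc.prems, of i] by blast
  obtain U where U: "open U" "0 \<in> U"
    "\<forall>x\<in>summable_coeffs. synth x \<in> U \<longrightarrow> (\<forall>j<i. \<bar>x j\<bar> < min e d)"
    using Suc.IH[of "min e d"] Suc.prems Z(3) by auto
  have "\<forall>j<Suc i. \<bar>x j\<bar> < e" if x: "x \<in> summable_coeffs" "synth x \<in> U \<inter> Z" for x
  proof (intro allI impI)
    fix j assume "j < Suc i"
    have head: "\<forall>j<i. \<bar>x j\<bar> < min e d"
      using U(3) x by blast
    show "\<bar>x j\<bar> < e"
    proof (cases "j = i")
      case True
      have "\<forall>j<i. \<bar>x j\<bar> < d"
        using head by simp
      then show ?thesis
        using small_i x True by blast
    next
      case False
      with \<open>j < Suc i\<close> head show ?thesis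
        by simp
    qed
  qed
  then show ?case
    using U(1,2) Z(1,2) by (intro exI[of _ "U \<inter> Z"]) auto
qed

lemma inj_on_synth: "inj_on synth summable_coeffs"
proof (rule inj_onI)
  fix x y assume x: "x \<in> summable_coeffs" and y: "y \<in> summable_coeffs" and "synth x = synth y"
  then have z: "(\<lambda>n. x n - y n) \<in> summable_coeffs" "synth (\<lambda>n. x n - y n) = 0"
    using synth_diff[OF x y] by simp_all
  show "x = y"
  proof
    fix i
    have "\<bar>x i - y i\<bar> < e" if "e > 0" for e
      using synth_small_imp_coeffs_small[OF that, of "Suc i"] z by fastforce
    from this[of "\<bar>x i - y i\<bar>"] show "x i = y i"
      by fastforce
  qed
qed

lemma continuous_on_inv_synth:
  "continuous_on (synth ` summable_coeffs) (inv_into summable_coeffs synth)"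
proof (rule continuous_on_coordinatewise_then_product)
  fix i
  show "continuous_on (synth ` summable_coeffs) (\<lambda>v. inv_into summable_coeffs synth v i)"
    unfolding continuous_on_def
  proof (intro ballI)
    fix v0 assume "v0 \<in> synth ` summable_coeffs"
    then obtain x0 where x0: "x0 \<in> summable_coeffs" "v0 = synth x0"
      by blast
    show "((\<lambda>v. inv_into summable_coeffs synth v i) \<longlongrightarrow> inv_into summable_coeffs synth v0 i)
        (at v0 within synth ` summable_coeffs)"
      unfolding tendsto_iff
    proof (intro allI impI)
      fix e :: real assume "e > 0"
      then obtain U where U: "open U" "0 \<in> U"
        "\<forall>x\<in>summable_coeffs. synth x \<in> U \<longrightarrow> (\<forall>j<Suc i. \<bar>x j\<bar> < e)"
        using synth_small_imp_coeffs_small by blast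
      define Ob where "Ob = {v. 1 *\<^sub>R v + (- v0) \<in> U}"
      have "open Ob"
        unfolding Ob_def by (rule open_affine_vimage[OF U(1)])
      moreover have "v0 \<in> Ob"
        using U(2) by (simp add: Ob_def)
      moreover have "dist (inv_into summable_coeffs synth v i) (inv_into summable_coeffs synth v0 i) < e"
        if v: "v \<in> Ob" "v \<in> synth ` summable_coeffs" for v
      proof -
        obtain x where x: "x \<in> summable_coeffs" "v = synth x"
          using v(2) by blast
        have "synth (\<lambda>n. x n - x0 n) \<in> U" "(\<lambda>n. x n - x0 n) \<in> summable_coeffs"
          using synth_diff[OF x(1) x0(1)] v(1) x(2) x0(2) by (simp_all add: Ob_def)
        then have "\<bar>x i - x0 i\<bar> < e"
          using U(3) by auto
        then show ?thesis
          using x x0 inj_on_synth by (simp add: dist_real_def)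
      qed
      ultimately show "\<forall>\<^sub>F v in at v0 within synth ` summable_coeffs.
          dist (inv_into summable_coeffs synth v i) (inv_into summable_coeffs synth v0 i) < e"
        unfolding eventually_at_topological by (intro exI[of _ Ob]) auto
    qed
  qed
qed

lemma homeomorphism_synth:
  "homeomorphism summable_coeffs (synth ` summable_coeffs) synth (inv_into summable_coeffs synth)"
  using continuous_on_synth continuous_on_inv_synth inj_on_synth
  by (auto simp: homeomorphism_def inv_into_image_cancel)

lemma fin_supp_subset_summable_coeffs: "fin_supp \<subseteq> summable_coeffs"
proof
  fix x :: "nat \<Rightarrow> real" assume "x \<in> fin_supp"
  then have "summable (\<lambda>n. x n *\<^sub>R a n)"
    by (intro summable_finite[of "{n. x n \<noteq> 0}"]) (simp_all add: fin_supp_def)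
  then show "x \<in> summable_coeffs"
    by (simp add: summable_coeffs_def)
qed

lemma summable_coeffs_eq_UNIV_if_complete:
  assumes "tvs_complete E"
  shows "summable_coeffs = UNIV"
proof (intro subset_antisym subset_UNIV subsetI)
  fix x :: "nat \<Rightarrow> real"
  define F where "F = filtermap (\<lambda>N. \<Sum>n<N. x n *\<^sub>R a n) sequentially"
  have "tvs_cauchy F"
    unfolding tvs_cauchy_def
  proof (intro allI impI)
    fix U :: "'a set" assume "open U \<and> 0 \<in> U"
    then obtain N where N: "span (a ` {N..}) \<subseteq> U"
      using tail_spans_vanish by blast
    define S where "S = (\<lambda>M. \<Sum>n<M. x n *\<^sub>R a n) ` {N..}"
    have "eventually (\<lambda>v. v \<in> S) F"
      unfolding F_def S_def eventually_filtermap eventually_sequentially by blast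
    moreover have "v - w \<in> U" if vw: "v \<in> S" "w \<in> S" for v w
    proof -
      obtain M K where MK: "N \<le> M" "N \<le> K"
          "v = (\<Sum>n<M. x n *\<^sub>R a n)" "w = (\<Sum>n<K. x n *\<^sub>R a n)"
        using vw unfolding S_def by blast
      have "(v - (\<Sum>n<N. x n *\<^sub>R a n)) - (w - (\<Sum>n<N. x n *\<^sub>R a n)) \<in> span (a ` {N..})"
        unfolding MK(3,4)
        by (intro span_diff partial_sums_diff_mem_tail_span MK(1,2))
      then show ?thesis
        using N by auto
    qed
    ultimately show "\<exists>S. eventually (\<lambda>v. v \<in> S) F \<and> (\<forall>v\<in>S. \<forall>w\<in>S. v - w \<in> U)"
      by blast
  qed
  moreover have "F \<noteq> bot"
    by (simp add: F_def filtermap_bot_iff)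
  ultimately obtain v where "F \<le> nhds v"
    using assms unfolding tvs_complete_def by blast
  then have "(\<lambda>n. x n *\<^sub>R a n) sums v"
    unfolding sums_def F_def filterlim_def .
  then show "x \<in> summable_coeffs"
    using sums_imp_synth by blast
qed

lemma synth_embedding:
  assumes "S \<subseteq> summable_coeffs"
  shows "(\<forall>x\<in>S. \<forall>y\<in>S. synth (\<lambda>n. x n + y n) = synth x + synth y) \<and>
    (\<forall>c. \<forall>x\<in>S. synth (\<lambda>n. c * x n) = c *\<^sub>R synth x) \<and>
    homeomorphism S (synth ` S) synth (inv_into summable_coeffs synth)"
proof (intro conjI ballI allI)
  show "synth (\<lambda>n. x n + y n) = synth x + synth y" if "x \<in> S" "y \<in> S" for x y
    using synth_add that assms by blast
  show "synth (\<lambda>n. c * x n) = c *\<^sub>R synth x" if "x \<in> S" for c x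
    using synth_scaleR that assms by blast
  show "homeomorphism S (synth ` S) synth (inv_into summable_coeffs synth)"
    by (rule homeomorphism_of_subsets[OF homeomorphism_synth assms image_mono[OF assms] refl])
qed

end

section \<open>Finitely supported integer sequences\<close>

lemma additive_on_fin_supp_scale_int:
  fixes f :: "(nat \<Rightarrow> int) \<Rightarrow> 'b::real_vector"
  assumes add: "\<forall>x\<in>fin_supp. \<forall>y\<in>fin_supp. f (\<lambda>n. x n + y n) = f x + f y"
    and x: "x \<in> fin_supp"
  shows "f (\<lambda>n. k * x n) = of_int k *\<^sub>R f x"
proof -
  have zero: "f (\<lambda>n. 0) = 0"
    using add[rule_format, of "\<lambda>n. 0" "\<lambda>n. 0"] by (simp add: fin_supp_def)
  have nat: "f (\<lambda>n. int m * x n) = real m *\<^sub>R f x" for m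
  proof (induction m)
    case 0
    then show ?case by (simp add: zero)
  next
    case (Suc m)
    have "f (\<lambda>n. int m * x n + x n) = f (\<lambda>n. int m * x n) + f x"
      using add[rule_format, OF fin_supp_mult[OF x, of "int m"] x] .
    then show ?case
      using Suc by (simp add: algebra_simps)
  qed
  have "f (\<lambda>n. - int m * x n) = - f (\<lambda>n. int m * x n)" for m
  proof -
    have "f (\<lambda>n. int m * x n + - int m * x n) = f (\<lambda>n. int m * x n) + f (\<lambda>n. - int m * x n)"
      by (rule add[rule_format, OF fin_supp_mult[OF x] fin_supp_mult[OF x]])
    then show ?thesis
      by (simp add: zero eq_neg_iff_add_eq_0 add.commute)
  qed
  then show ?thesis
    using nat by (cases k rule: int_cases2) simp_all
qed

lemma int_span_additive_image_subset:
  fixes f :: "(nat \<Rightarrow> int) \<Rightarrow> 'b::real_vector"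
  assumes add: "\<forall>x\<in>fin_supp. \<forall>y\<in>fin_supp. f (\<lambda>n. x n + y n) = f x + f y"
    and u: "\<And>m. u m \<in> fin_supp" "\<And>m n. n < m \<Longrightarrow> u m n = 0"
    and B: "B \<subseteq> (f \<circ> u) ` {N..}"
  shows "int_span B \<subseteq> f ` {x \<in> fin_supp. \<forall>n<N. x n = 0}"
proof (rule int_span_subset)
  have "(\<lambda>n. 0 :: int) \<in> {x \<in> fin_supp. \<forall>n<N. x n = 0}"
    by (simp add: fin_supp_def)
  then have "f (\<lambda>n. 0) \<in> f ` {x \<in> fin_supp. \<forall>n<N. x n = 0}"
    by (rule imageI)
  moreover have "f (\<lambda>n. 0 * u 0 n) = of_int 0 *\<^sub>R f (u 0)"
    by (rule additive_on_fin_supp_scale_int[OF add u(1)])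
  ultimately show "0 \<in> f ` {x \<in> fin_supp. \<forall>n<N. x n = 0}"
    by simp
next
  fix v w assume "v \<in> f ` {x \<in> fin_supp. \<forall>n<N. x n = 0}" "w \<in> f ` {x \<in> fin_supp. \<forall>n<N. x n = 0}"
  then obtain x y where xy: "x \<in> fin_supp" "\<forall>n<N. x n = 0" "y \<in> fin_supp" "\<forall>n<N. y n = 0"
    and "v = f x" "w = f y"
    by blast
  then have "v + w = f (\<lambda>n. x n + y n)"
    using add by simp
  moreover have "(\<lambda>n. x n + y n) \<in> {x \<in> fin_supp. \<forall>n<N. x n = 0}"
    using xy by (simp add: fin_supp_add)
  ultimately show "v + w \<in> f ` {x \<in> fin_supp. \<forall>n<N. x n = 0}"
    by blast
next
  fix k b assume "b \<in> B"
  then obtain m where m: "b = f (u m)" "N \<le> m"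
    using B by fastforce
  have "(\<lambda>n. k * u m n) \<in> {x \<in> fin_supp. \<forall>n<N. x n = 0}"
    using fin_supp_mult[OF u(1)] u(2) m(2) by auto
  moreover have "of_int k *\<^sub>R b = f (\<lambda>n. k * u m n)"
    by (simp only: m(1) additive_on_fin_supp_scale_int[OF add u(1)])
  ultimately show "of_int k *\<^sub>R b \<in> f ` {x \<in> fin_supp. \<forall>n<N. x n = 0}"
    by blast
qed

lemma continuous_on_fin_supp_initial_zero:
  fixes f :: "(nat \<Rightarrow> 'c::{zero, topological_space}) \<Rightarrow> 'b::topological_space"
  assumes "continuous_on fin_supp f" "open U" "f (\<lambda>n. 0) \<in> U"
  obtains N where "f ` {x \<in> fin_supp. \<forall>n<N. x n = 0} \<subseteq> U"
proof -
  have "\<exists>W. open W \<and> W \<inter> fin_supp = f -` U \<inter> fin_supp"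
    using assms(1,2) by (simp add: continuous_on_open_invariant)
  then obtain W where W: "open W" "W \<inter> fin_supp = f -` U \<inter> fin_supp"
    by blast
  have "(\<lambda>n. 0) \<in> W"
    using assms(3) W(2) by (auto simp: fin_supp_def)
  then obtain N where N: "\<forall>x. (\<forall>n<N. x n = 0) \<longrightarrow> x \<in> W"
    by (rule open_fun_initial_segment[OF W(1)])
  have "f ` {x \<in> fin_supp. \<forall>n<N. x n = 0} \<subseteq> U"
  proof
    fix v assume "v \<in> f ` {x \<in> fin_supp. \<forall>n<N. x n = 0}"
    then obtain x where x: "x \<in> fin_supp" "\<forall>n<N. x n = 0" "v = f x"
      by blast
    then have "x \<in> W \<inter> fin_supp"
      using N by blast
    then have "x \<in> f -` U"
      unfolding W(2) by blast
    then show "v \<in> U"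
      using x(3) by simp
  qed
  then show ?thesis
    by (rule that)
qed

lemma abs_cauchy_summable_if_int_embedding:
  fixes f :: "(nat \<Rightarrow> int) \<Rightarrow> 'b::{real_vector, topological_space}"
  assumes add: "\<forall>x\<in>fin_supp. \<forall>y\<in>fin_supp. f (\<lambda>n. x n + y n) = f x + f y"
    and hom: "homeomorphism fin_supp (f ` fin_supp) f g"
  shows "\<exists>A::'b set. infinite A \<and> abs_cauchy_summable A"
proof -
  define e where "e m = (\<lambda>n::nat. if n = m then 1 else 0 :: int)" for m :: nat
  have e: "e m \<in> fin_supp" for m
    by (simp add: e_def fin_supp_def)
  have "inj e"
    by (rule injI) (metis e_def zero_neq_one)
  have "inj_on f fin_supp"
    using homeomorphism_apply1[OF hom] by (rule inj_on_inverseI)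
  have "inj (f \<circ> e)"
    by (rule comp_inj_on[OF \<open>inj e\<close> inj_on_subset[OF \<open>inj_on f fin_supp\<close>]]) (use e in auto)
  define A where "A = range (f \<circ> e)"
  have "abs_cauchy_summable A"
    unfolding abs_cauchy_summable_def
  proof (intro allI impI)
    fix U :: "'b set" assume U: "open U \<and> 0 \<in> U"
    have "continuous_on fin_supp f"
      using hom by (simp add: homeomorphism_def)
    moreover have "f (\<lambda>n. 0) = 0"
      using additive_on_fin_supp_scale_int[OF add e, where k = 0] by simp
    ultimately obtain N where N: "f ` {x \<in> fin_supp. \<forall>n<N. x n = 0} \<subseteq> U"
      by (elim continuous_on_fin_supp_initial_zero) (use U in auto)
    have "e m n = 0" if "n < m" for m n
      using that by (simp add: e_def)
    moreover have "A - (f \<circ> e) ` {..<N} \<subseteq> (f \<circ> e) ` {N..}"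
    proof
      fix v assume v: "v \<in> A - (f \<circ> e) ` {..<N}"
      then obtain m where "v = (f \<circ> e) m"
        by (auto simp: A_def)
      with v have "v = (f \<circ> e) m" "\<not> m < N"
        by auto
      then show "v \<in> (f \<circ> e) ` {N..}"
        by (simp add: not_less)
    qed
    ultimately have "int_span (A - (f \<circ> e) ` {..<N}) \<subseteq> f ` {x \<in> fin_supp. \<forall>n<N. x n = 0}"
      by (rule int_span_additive_image_subset[OF add e])
    then have "int_span (A - (f \<circ> e) ` {..<N}) \<subseteq> U"
      using N by (rule order_trans)
    moreover have "finite ((f \<circ> e) ` {..<N})" "(f \<circ> e) ` {..<N} \<subseteq> A"
      unfolding A_def by auto
    ultimately show "\<exists>F. finite F \<and> F \<subseteq> A \<and> int_span (A - F) \<subseteq> U"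
      by (intro exI[of _ "(f \<circ> e) ` {..<N}"] conjI)
  qed
  moreover have "infinite A"
    unfolding A_def using range_inj_infinite[OF \<open>inj (f \<circ> e)\<close>] .
  ultimately show ?thesis
    by (intro exI[of _ A] conjI)
qed

lemma homeomorphism_of_int_seq:
  "homeomorphism fin_supp ((\<lambda>x n. real_of_int (x n)) ` fin_supp)
     (\<lambda>x n. real_of_int (x n)) (\<lambda>y n. \<lfloor>y n\<rfloor>)"
  unfolding homeomorphism_def
proof (intro conjI ballI)
  show "continuous_on fin_supp (\<lambda>x n. real_of_int (x n))"
    by (intro continuous_on_coordinatewise_then_product continuous_on_of_int
        continuous_on_subset[OF continuous_on_product_coordinates] subset_UNIV)
  show "continuous_on ((\<lambda>x n. real_of_int (x n)) ` fin_supp) (\<lambda>y n. \<lfloor>y n\<rfloor>)"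
    by (intro continuous_on_coordinatewise_then_product continuous_on_floor_Ints
        continuous_on_subset[OF continuous_on_product_coordinates] subset_UNIV) auto
qed (auto simp: image_image)

lemma int_embedding_if_real_embedding:
  fixes f :: "(nat \<Rightarrow> real) \<Rightarrow> 'b::{real_vector, topological_space}"
  assumes add: "\<forall>x\<in>fin_supp. \<forall>y\<in>fin_supp. f (\<lambda>n. x n + y n) = f x + f y"
    and hom: "homeomorphism fin_supp (f ` fin_supp) f g"
  shows "\<exists>(f'::(nat \<Rightarrow> int) \<Rightarrow> 'b) g'.
    (\<forall>x\<in>fin_supp. \<forall>y\<in>fin_supp. f' (\<lambda>n. x n + y n) = f' x + f' y) \<and>
    homeomorphism fin_supp (f' ` fin_supp) f' g'"
proof (intro exI conjI)
  define \<iota> where "\<iota> x = (\<lambda>n. real_of_int (x n))" for x :: "nat \<Rightarrow> int"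
  have sub: "\<iota> ` fin_supp \<subseteq> fin_supp"
    by (auto simp: \<iota>_def fin_supp_def)
  have "homeomorphism (\<iota> ` fin_supp) (f ` \<iota> ` fin_supp) f g"
    using homeomorphism_of_subsets[OF hom sub image_mono[OF sub]] by blast
  with homeomorphism_of_int_seq
  show "homeomorphism fin_supp ((f \<circ> \<iota>) ` fin_supp) (f \<circ> \<iota>) ((\<lambda>y n. \<lfloor>y n\<rfloor>) \<circ> g)"
    unfolding image_comp[symmetric] \<iota>_def by (rule homeomorphism_compose)
  show "\<forall>x\<in>fin_supp. \<forall>y\<in>fin_supp. (f \<circ> \<iota>) (\<lambda>n. x n + y n) = (f \<circ> \<iota>) x + (f \<circ> \<iota>) y"
  proof (intro ballI)
    fix x y :: "nat \<Rightarrow> int" assume "x \<in> fin_supp" "y \<in> fin_supp"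
    then have "\<iota> x \<in> fin_supp" "\<iota> y \<in> fin_supp"
      using sub by auto
    from add[rule_format, OF this] show "(f \<circ> \<iota>) (\<lambda>n. x n + y n) = (f \<circ> \<iota>) x + (f \<circ> \<iota>) y"
      by (simp add: \<iota>_def)
  qed
qed

context topological_vector_space
begin

lemma fin_supp_embedding_if_abs_cauchy_summable:
  assumes "infinite (A::'a set)" "abs_cauchy_summable A"
  shows "\<exists>(f::(nat \<Rightarrow> real) \<Rightarrow> 'a) g.
    (\<forall>x\<in>fin_supp. \<forall>y\<in>fin_supp. f (\<lambda>n. x n + y n) = f x + f y) \<and>
    (\<forall>c. \<forall>x\<in>fin_supp. f (\<lambda>n. c * x n) = c *\<^sub>R f x) \<and>
    homeomorphism fin_supp (f ` fin_supp) f g"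
proof -
  obtain a :: "nat \<Rightarrow> 'a" where "basic_sequence a"
    by (rule abs_cauchy_summable_basic_sequence[OF assms])
  then interpret basic_sequence E a .
  show ?thesis
    using synth_embedding[OF fin_supp_subset_summable_coeffs]
    by (intro exI[of _ synth] exI[of _ "inv_into summable_coeffs synth"])
qed

lemma embedding_if_abs_cauchy_summable_complete:
  assumes "infinite (A::'a set)" "abs_cauchy_summable A" "tvs_complete E"
  shows "\<exists>(f::(nat \<Rightarrow> real) \<Rightarrow> 'a) g.
    (\<forall>x y. f (\<lambda>n. x n + y n) = f x + f y) \<and>
    (\<forall>c x. f (\<lambda>n. c * x n) = c *\<^sub>R f x) \<and> homeomorphism UNIV (range f) f g"
proof -
  obtain a :: "nat \<Rightarrow> 'a" where "basic_sequence a"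
    by (rule abs_cauchy_summable_basic_sequence[OF assms(1,2)])
  then interpret basic_sequence E a .
  show ?thesis
    using synth_embedding[of UNIV] summable_coeffs_eq_UNIV_if_complete[OF assms(3)]
    by (intro exI[of _ synth] exI[of _ "inv_into summable_coeffs synth"]) simp
qed

end

lemma fin_supp_embedding_if_embedding:
  fixes f :: "(nat \<Rightarrow> real) \<Rightarrow> 'b::{real_vector, topological_space}"
  assumes "\<forall>x y. f (\<lambda>n. x n + y n) = f x + f y" "\<forall>c x. f (\<lambda>n. c * x n) = c *\<^sub>R f x"
    and "homeomorphism UNIV (range f) f g"
  shows "\<exists>(f::(nat \<Rightarrow> real) \<Rightarrow> 'b) g.
    (\<forall>x\<in>fin_supp. \<forall>y\<in>fin_supp. f (\<lambda>n. x n + y n) = f x + f y) \<and>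
    (\<forall>c. \<forall>x\<in>fin_supp. f (\<lambda>n. c * x n) = c *\<^sub>R f x) \<and>
    homeomorphism fin_supp (f ` fin_supp) f g"
  using assms
  by (intro exI[of _ f] exI[of _ g] conjI ballI allI homeomorphism_of_subsets[OF _ subset_UNIV order_refl refl])
    simp_all

theorem theorem11p1:
  fixes E :: "'a::{real_vector, topological_monoid_add, t2_space} itself"
  assumes scal_cont: "continuous_on UNIV (\<lambda>p::real \<times> 'a. fst p *\<^sub>R snd p)"
  defines "cond_i \<equiv> (\<exists>(f::(nat \<Rightarrow> real) \<Rightarrow> 'a) g.
              (\<forall>x\<in>fin_supp. \<forall>y\<in>fin_supp. f (\<lambda>n. x n + y n) = f x + f y) \<and>
              (\<forall>c. \<forall>x\<in>fin_supp. f (\<lambda>n. c * x n) = c *\<^sub>R f x) \<and>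
              homeomorphism fin_supp (f ` fin_supp) f g)"
      and "cond_ii \<equiv> (\<exists>(f::(nat \<Rightarrow> int) \<Rightarrow> 'a) g.
              (\<forall>x\<in>fin_supp. \<forall>y\<in>fin_supp. f (\<lambda>n. x n + y n) = f x + f y) \<and>
              homeomorphism fin_supp (f ` fin_supp) f g)"
      and "cond_iii \<equiv> (\<exists>A::'a set. infinite A \<and> abs_cauchy_summable A)"
      and "cond_iv \<equiv> (\<exists>(f::(nat \<Rightarrow> real) \<Rightarrow> 'a) g.
              (\<forall>x y. f (\<lambda>n. x n + y n) = f x + f y) \<and>
              (\<forall>c x. f (\<lambda>n. c * x n) = c *\<^sub>R f x) \<and> homeomorphism UNIV (range f) f g)"
  shows "(cond_i \<longleftrightarrow> cond_ii) \<and> (cond_ii \<longleftrightarrow> cond_iii) \<and>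
         (tvs_complete E \<longrightarrow> (cond_iii \<longleftrightarrow> cond_iv))"
proof -
  interpret topological_vector_space E
    by (rule topological_vector_space.intro[OF scal_cont])
  have "cond_i \<Longrightarrow> cond_ii"
    unfolding cond_i_def cond_ii_def by (elim exE conjE) (rule int_embedding_if_real_embedding)
  moreover have "cond_ii \<Longrightarrow> cond_iii"
    unfolding cond_ii_def cond_iii_def by (elim exE conjE) (rule abs_cauchy_summable_if_int_embedding)
  moreover have "cond_iii \<Longrightarrow> cond_i"
    unfolding cond_iii_def cond_i_def
    by (elim exE conjE) (rule fin_supp_embedding_if_abs_cauchy_summable)
  moreover have "cond_iii \<Longrightarrow> tvs_complete E \<Longrightarrow> cond_iv"
    unfolding cond_iii_def cond_iv_def
    by (elim exE conjE) (rule embedding_if_abs_cauchy_summable_complete)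
  moreover have "cond_iv \<Longrightarrow> cond_i"
    unfolding cond_iv_def cond_i_def by (elim exE conjE) (rule fin_supp_embedding_if_embedding)
  ultimately show ?thesis
    by blast
qed

end
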